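(* Let $S$ be a finite set of agents, $p>0$ a price and $k$ a positive integer. Let $(x,\tilde x)$ be the pair returned by $\mathrm{Indiv\_Alloc}(S,p,k)$ and let $x'$ be the allocation returned by $\mathrm{Div\_Alloc}(S,p,k)$. Then $$\mathbb{E}\Big[\sum_{i\in S}\tilde x_i\Big]\ \ge\ \frac12\sum_{i\in S} x'_i,$$ where the expectation is over the internal randomness of $\mathrm{Indiv\_Alloc}$ (and, if relevant, of $\mathrm{Div\_Alloc}$).
   Context: Each agent $i$ has a value $v_i\ge 0$ and a budget $b_i\ge 0$. The procedure $\mathrm{Div\_Alloc}(S,p,k)$: set $k'\gets k$, $x_i\gets 0$ for all $i\in S$; draw a uniformly random permutation $\pi$ of $S$; for $t=1,\dots,|S|$, if $v_{\pi(t)}\ge p$ set $x_{\pi(t)}\gets\min\{b_{\pi(t)}/p,k'\}$ and $k'\gets k'-x_{\pi(t)}$; return $x$. (Note $\sum_i x_i=\min\{\sum_{i\in S: v_i\ge p} b_i/p,\ k\}$.) The procedure $\mathrm{Indiv\_Alloc}(S,p,k)$: draw a uniformly random permutation $\pi$ of $S$; set $k'\gets k$, $x_i\gets 0$, $\tilde x_i\gets 0$ for all $i\in S$; for $t=1,\dots,|S|$, with $i=\pi(t)$: if $v_i\ge p$, then (a) if $k'\le b_i/p$, set $x_i\gets k'$ and $\tilde x_i\gets k'$; (b) otherwise set $\tilde x_i\gets b_i/p$ and set $x_i\gets\lceil b_i/p\rceil$ with probability $b_i/p-\lfloor b_i/p\rfloor$ and $x_i\gets\lfloor b_i/p\rfloor$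 otherwise (independently of everything else); then set $k'\gets k'-x_i$. Return $(x,\tilde x)$. Here $x$ is the (integral) allocation and $\tilde x$ is the quantity the agent is charged for. *)

theory Defs
  imports "HOL-Probability.Probability" "HOL-Combinatorics.Multiset_Permutations"
begin

text \<open>Agents have type 'a; values v and budgets b are functions on agents.
  A uniformly random permutation of S is a uniformly random distinct list
  enumerating S. Allocations are functions 'a => real (zero outside the processed agents).\<close>

text \<open>Div_Alloc: state is (remaining supply k', allocation x).\<close>
definition div_step :: "('a \<Rightarrow> real) \<Rightarrow> ('a \<Rightarrow> real) \<Rightarrow> real \<Rightarrow> 'a
    \<Rightarrow> real \<times> ('a \<Rightarrow> real) \<Rightarrow> real \<times> ('a \<Rightarrow> real)" where
  "div_step v b p i st =
     (if v i \<ge> p then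
        (let a = min (b i / p) (fst st) in (fst st - a, (snd st)(i := a)))
      else st)"

definition Div_Alloc :: "('a \<Rightarrow> real) \<Rightarrow> ('a \<Rightarrow> real) \<Rightarrow> 'a set \<Rightarrow> real \<Rightarrow> nat
    \<Rightarrow> ('a \<Rightarrow> real) pmf" where
  "Div_Alloc v b S p k =
     map_pmf (\<lambda>\<pi>. snd (foldl (\<lambda>st i. div_step v b p i st) (real k, \<lambda>_. 0) \<pi>))
             (pmf_of_set (permutations_of_set S))"

text \<open>Indiv_Alloc: state is (remaining supply k', allocation x, charged quantity xt).\<close>
definition indiv_step :: "('a \<Rightarrow> real) \<Rightarrow> ('a \<Rightarrow> real) \<Rightarrow> real \<Rightarrow> 'a
    \<Rightarrow> real \<times> ('a \<Rightarrow> real) \<times> ('a \<Rightarrow> real)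
    \<Rightarrow> (real \<times> ('a \<Rightarrow> real) \<times> ('a \<Rightarrow> real)) pmf" where
  "indiv_step v b p i st =
     (let k' = fst st; x = fst (snd st); xt = snd (snd st) in
      if v i \<ge> p then
        (if k' \<le> b i / p then return_pmf (k' - k', x(i := k'), xt(i := k'))
         else map_pmf
           (\<lambda>c. let xi = (if c then of_int \<lceil>b i / p\<rceil> else of_int \<lfloor>b i / p\<rfloor>)
                 in (k' - xi, x(i := xi), xt(i := b i / p)))
           (bernoulli_pmf (b i / p - of_int \<lfloor>b i / p\<rfloor>)))
      else return_pmf st)"

definition Indiv_Alloc :: "('a \<Rightarrow> real) \<Rightarrow> ('a \<Rightarrow> real) \<Rightarrow> 'a set \<Rightarrow> real \<Rightarrow> nat
    \<Rightarrow> (('a \<Rightarrow> real) \<times> ('a \<Rightarrow> real)) pmf" where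
  "Indiv_Alloc v b S p k =
     pmf_of_set (permutations_of_set S) \<bind>
       (\<lambda>\<pi>. map_pmf snd
               (foldl (\<lambda>M i. M \<bind> indiv_step v b p i)
                      (return_pmf (real k, \<lambda>_. 0, \<lambda>_. 0)) \<pi>))"

end

theory Submission
  imports Defs
begin

text \<open>Fix the permutation \<pi> and let R be the demand of \<pi>, i.e. the sum of b_i/p over the
  eligible agents (v_i \<ge> p) of \<pi>. The divisible procedure hands out at most min R k.
  For the indivisible one consider the potential
  (quantity charged so far) + 1/2 min (remaining demand) (remaining supply).
  Initially it is 1/2 min R k and finally it is the total charge. Serving agent i
  with c = b_i/p < k' charges c and, by randomized rounding, removes c units of supply in
  expectation, so the min term drops by at most c in expectation; as min (c + R') k' \<le>
  c + min R' k', the potential does not decrease in expectation. Serving the last agent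
  with k' \<le> b_i/p charges k', which is again at least the potential.\<close>

definition demand :: "('a \<Rightarrow> real) \<Rightarrow> ('a \<Rightarrow> real) \<Rightarrow> real \<Rightarrow> 'a list \<Rightarrow> real" where
  "demand v b p \<pi> = (\<Sum>i\<leftarrow>\<pi>. if p \<le> v i then b i / p else 0)"

lemma demand_Nil [simp]: "demand v b p [] = 0"
  by (simp add: demand_def)

lemma demand_Cons: "demand v b p (i # \<pi>) = (if p \<le> v i then b i / p else 0) + demand v b p \<pi>"
  by (simp add: demand_def)

lemma demand_nonneg:
  assumes "p > 0" "\<forall>i\<in>set \<pi>. b i \<ge> 0"
  shows "demand v b p \<pi> \<ge> 0"
  using assms unfolding demand_def by (induction \<pi>) auto

lemma sum_fun_upd_in:
  fixes f :: "'a \<Rightarrow> 'b::ab_group_add"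
  assumes "finite S" "i \<in> S"
  shows "(\<Sum>j\<in>S. (f(i := c)) j) = (\<Sum>j\<in>S. f j) - f i + c"
  using assms by (simp add: sum.remove[of S i] sum.cong[of "S - {i}" _ "f(i := c)" f])

lemma expectation_bind_finite:
  fixes h :: "'b \<Rightarrow> real"
  assumes "finite (set_pmf M)" "\<And>x. x \<in> set_pmf M \<Longrightarrow> finite (set_pmf (f x))"
  shows "measure_pmf.expectation (M \<bind> f) h
           = measure_pmf.expectation M (\<lambda>x. measure_pmf.expectation (f x) h)"
  using assms
  by (simp add: pmf_expectation_bind[of "set_pmf M"] integral_measure_pmf[of "set_pmf M"])

lemma expectation_mono_finite:
  fixes f g :: "'b \<Rightarrow> real"
  assumes "finite (set_pmf M)" "\<And>x. x \<in> set_pmf M \<Longrightarrow> f x \<le> g x"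
  shows "measure_pmf.expectation M f \<le> measure_pmf.expectation M g"
  using assms
  by (intro integral_mono_AE integrable_measure_pmf_finite) (auto simp: AE_measure_pmf_iff)

lemma randomized_rounding_mean:
  fixes c :: real
  shows "(c - \<lfloor>c\<rfloor>) * \<lceil>c\<rceil> + (1 - (c - \<lfloor>c\<rfloor>)) * \<lfloor>c\<rfloor> = c"
proof (cases "c \<in> \<int>")
  case False
  then have "c \<noteq> of_int \<lfloor>c\<rfloor>"
    by (metis Ints_of_int)
  then have "\<lceil>c\<rceil> = \<lfloor>c\<rfloor> + 1"
    by (simp add: ceiling_altdef)
  then show ?thesis by (simp add: algebra_simps)
qed (auto elim: Ints_cases)

lemma half_min_after_mixed_draw:
  fixes q c C F R k :: real
  assumes "0 \<le> q" "q \<le> 1" "C \<ge> 0" "F \<ge> 0" "q * C + (1 - q) * F = c"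
  shows "1/2 * min (c + R) k \<le> c + 1/2 * (q * min R (k - C) + (1 - q) * min R (k - F))"
proof -
  have "min R k - c = q * (min R k - C) + (1 - q) * (min R k - F)"
    using assms(5) by (simp add: algebra_simps)
  also have "\<dots> \<le> q * min R (k - C) + (1 - q) * min R (k - F)"
    using assms by (intro add_mono mult_left_mono) auto
  finally have "min R k - c \<le> q * min R (k - C) + (1 - q) * min R (k - F)" .
  moreover have "c \<ge> 0"
    using assms by (metis add_nonneg_nonneg mult_nonneg_nonneg diff_ge_0_iff_ge)
  then have "min (c + R) k \<le> c + min R k"
    by linarith
  ultimately show ?thesis by argo
qed

text \<open>Integrality of the remaining supply is what keeps it nonnegative after rounding up.\<close>

definition indiv_invariant :: "'a list \<Rightarrow> real \<times> ('a \<Rightarrow> real) \<times> ('a \<Rightarrow> real) \<Rightarrow> bool" where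
  "indiv_invariant \<pi> st \<longleftrightarrow> fst st \<in> \<int> \<and> fst st \<ge> 0 \<and> (\<forall>j\<in>set \<pi>. snd (snd st) j = 0)"

definition indiv_potential :: "('a \<Rightarrow> real) \<Rightarrow> ('a \<Rightarrow> real) \<Rightarrow> real \<Rightarrow> 'a set \<Rightarrow> 'a list
    \<Rightarrow> real \<times> ('a \<Rightarrow> real) \<times> ('a \<Rightarrow> real) \<Rightarrow> real" where
  "indiv_potential v b p S \<pi> st = (\<Sum>j\<in>S. snd (snd st) j) + 1/2 * min (demand v b p \<pi>) (fst st)"

lemma finite_set_pmf_indiv_step: "finite (set_pmf (indiv_step v b p i st))"
  unfolding indiv_step_def Let_def by auto

lemma finite_set_pmf_foldl_indiv_step:
  "finite (set_pmf M) \<Longrightarrow> finite (set_pmf (foldl (\<lambda>M i. M \<bind> indiv_step v b p i) M \<pi>))"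
  by (induction \<pi> arbitrary: M) (auto simp: finite_set_pmf_indiv_step)

lemma indiv_step_preserves_invariant:
  assumes "i \<notin> set \<pi>" "indiv_invariant (i # \<pi>) st" "st' \<in> set_pmf (indiv_step v b p i st)"
  shows "indiv_invariant \<pi> st'"
proof -
  obtain k' x xt where st: "st = (k', x, xt)"
    by (cases st) auto
  from assms(2) obtain m where m: "k' = of_int m" "m \<ge> 0" and charged: "\<forall>j\<in>set \<pi>. xt j = 0"
    unfolding st indiv_invariant_def by (auto elim!: Ints_cases)
  consider "\<not> p \<le> v i" | "p \<le> v i" "k' \<le> b i / p" | "p \<le> v i" "\<not> k' \<le> b i / p"
    by blast
  then show ?thesis
  proof cases
    case 3
    then have "\<lceil>b i / p\<rceil> \<le> m"
      using m by (simp add: ceiling_le_iff)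
    moreover have "\<lfloor>b i / p\<rfloor> \<le> \<lceil>b i / p\<rceil>"
      by (rule floor_le_ceiling)
    ultimately have "\<lfloor>b i / p\<rfloor> \<le> m" "\<lceil>b i / p\<rceil> \<le> m"
      by linarith+
    with 3 show ?thesis
      using assms(1,3) charged m unfolding st indiv_step_def indiv_invariant_def by (auto simp: Let_def)
  qed (use assms charged in \<open>auto simp: st indiv_step_def indiv_invariant_def\<close>)
qed

lemma indiv_step_potential:
  assumes "p > 0" "\<forall>i\<in>S. b i \<ge> 0" "finite S" "i \<in> S" "set \<pi> \<subseteq> S"
    and "indiv_invariant (i # \<pi>) st"
  shows "indiv_potential v b p S (i # \<pi>) st
           \<le> measure_pmf.expectation (indiv_step v b p i st) (indiv_potential v b p S \<pi>)"
proof -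
  obtain k' x xt where st: "st = (k', x, xt)"
    by (cases st) auto
  have "xt i = 0" "k' \<ge> 0"
    using assms(6) unfolding st indiv_invariant_def by auto
  define T where "T = (\<Sum>j\<in>S. xt j)"
  define R where "R = demand v b p \<pi>"
  define c where "c = b i / p"
  have charge: "(\<Sum>j\<in>S. if j = i then a else xt j) = T + a" for a
    using sum_fun_upd_in[OF assms(3,4), of xt a] \<open>xt i = 0\<close> by (simp add: T_def)
  have "R \<ge> 0" "c \<ge> 0"
    using assms demand_nonneg[of p \<pi> b v] unfolding R_def c_def by auto
  consider "\<not> p \<le> v i" | "p \<le> v i" "k' \<le> c" | "p \<le> v i" "\<not> k' \<le> c"
    by blast
  then show ?thesis
  proof cases
    case 1
    then show ?thesis
      by (simp add: st indiv_step_def indiv_potential_def demand_Cons)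
  next
    case 2
    then show ?thesis
      using charge \<open>R \<ge> 0\<close> \<open>k' \<ge> 0\<close>
      by (simp add: st indiv_step_def indiv_potential_def demand_Cons R_def[symmetric] c_def[symmetric]
          T_def[symmetric])
  next
    case 3
    define q where "q = c - \<lfloor>c\<rfloor>"
    have q: "0 \<le> q" "q \<le> 1"
      unfolding q_def by linarith+
    have "measure_pmf.expectation (indiv_step v b p i st) (indiv_potential v b p S \<pi>)
        = q * (T + c + 1/2 * min R (k' - \<lceil>c\<rceil>)) + (1 - q) * (T + c + 1/2 * min R (k' - \<lfloor>c\<rfloor>))"
      using 3 q unfolding st indiv_step_def indiv_potential_def Let_def c_def[symmetric] q_def[symmetric]
      by (simp add: charge R_def)
    also have "\<dots> = T + (c + 1/2 * (q * min R (k' - \<lceil>c\<rceil>) + (1 - q) * min R (k' - \<lfloor>c\<rfloor>)))"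
      by (simp add: ring_distribs)
    also have "\<dots> \<ge> T + 1/2 * min (c + R) k'"
      using half_min_after_mixed_draw[OF q, of "\<lceil>c\<rceil>" "\<lfloor>c\<rfloor>" c R k'] \<open>c \<ge> 0\<close>
        randomized_rounding_mean[of c] by (simp add: q_def)
    finally show ?thesis
      using 3 by (simp add: st indiv_potential_def demand_Cons T_def R_def c_def)
  qed
qed

lemma indiv_potential_le_expected_charge:
  assumes "p > 0" "\<forall>i\<in>S. b i \<ge> 0" "finite S" "distinct \<pi>" "set \<pi> \<subseteq> S"
    and "finite (set_pmf M)" "\<forall>st\<in>set_pmf M. indiv_invariant \<pi> st"
  shows "measure_pmf.expectation M (indiv_potential v b p S \<pi>)
           \<le> measure_pmf.expectation (foldl (\<lambda>M i. M \<bind> indiv_step v b p i) M \<pi>)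
                (\<lambda>st. \<Sum>j\<in>S. snd (snd st) j)"
  using assms(4-7)
proof (induction \<pi> arbitrary: M)
  case Nil
  then show ?case
    by (auto intro!: expectation_mono_finite simp: indiv_potential_def)
next
  case (Cons i \<pi>)
  define M' where "M' = M \<bind> indiv_step v b p i"
  have "finite (set_pmf M')"
    using Cons.prems(3) by (simp add: M'_def finite_set_pmf_indiv_step)
  moreover have "\<forall>st'\<in>set_pmf M'. indiv_invariant \<pi> st'"
    using Cons.prems indiv_step_preserves_invariant[of i \<pi>]
    by (auto simp: M'_def)
  ultimately have IH: "measure_pmf.expectation M' (indiv_potential v b p S \<pi>)
      \<le> measure_pmf.expectation (foldl (\<lambda>M i. M \<bind> indiv_step v b p i) M' \<pi>)
           (\<lambda>st. \<Sum>j\<in>S. snd (snd st) j)"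
    using Cons.IH Cons.prems by auto
  have "measure_pmf.expectation M (indiv_potential v b p S (i # \<pi>))
      \<le> measure_pmf.expectation M
           (\<lambda>st. measure_pmf.expectation (indiv_step v b p i st) (indiv_potential v b p S \<pi>))"
    using Cons.prems assms(1-3)
    by (intro expectation_mono_finite indiv_step_potential) auto
  also have "\<dots> = measure_pmf.expectation M' (indiv_potential v b p S \<pi>)"
    unfolding M'_def using Cons.prems(3)
    by (intro expectation_bind_finite[symmetric]) (auto simp: finite_set_pmf_indiv_step)
  finally show ?case
    using IH by (simp add: M'_def)
qed

lemma div_total_le_min_demand:
  assumes "finite S" "distinct \<pi>" "set \<pi> \<subseteq> S" "k' \<ge> 0" "\<forall>j\<in>set \<pi>. x j = 0"
  shows "(\<Sum>j\<in>S. snd (foldl (\<lambda>st i. div_step v b p i st) (k', x) \<pi>) j)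
           \<le> (\<Sum>j\<in>S. x j) + min (demand v b p \<pi>) k'"
  using assms(2-5)
proof (induction \<pi> arbitrary: k' x)
  case (Cons i \<pi>)
  show ?case
  proof (cases "p \<le> v i")
    case False
    then show ?thesis
      using Cons by (simp add: div_step_def demand_Cons)
  next
    case True
    define a where "a = min (b i / p) k'"
    have "(\<Sum>j\<in>S. snd (foldl (\<lambda>st i. div_step v b p i st) (k' - a, x(i := a)) \<pi>) j)
        \<le> (\<Sum>j\<in>S. (x(i := a)) j) + min (demand v b p \<pi>) (k' - a)"
      using Cons by (intro Cons.IH) (auto simp: a_def)
    also have "\<dots> = (\<Sum>j\<in>S. x j) + (a + min (demand v b p \<pi>) (k' - a))"
      using sum_fun_upd_in[OF assms(1), of i x a] Cons.prems by auto
    also have "\<dots> \<le> (\<Sum>j\<in>S. x j) + min (demand v b p (i # \<pi>)) k'"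
      using True by (auto simp: a_def demand_Cons)
    finally show ?thesis
      using True by (simp add: div_step_def a_def Let_def)
  qed
qed simp

lemma half_div_total_le_expected_charge:
  assumes "p > 0" "\<forall>i\<in>S. b i \<ge> 0" "finite S" "distinct \<pi>" "set \<pi> = S"
  shows "1/2 * (\<Sum>j\<in>S. snd (foldl (\<lambda>st i. div_step v b p i st) (real k, \<lambda>_. 0) \<pi>) j)
           \<le> measure_pmf.expectation
                (foldl (\<lambda>M i. M \<bind> indiv_step v b p i) (return_pmf (real k, \<lambda>_. 0, \<lambda>_. 0)) \<pi>)
                (\<lambda>st. \<Sum>j\<in>S. snd (snd st) j)"
proof -
  have "1/2 * (\<Sum>j\<in>S. snd (foldl (\<lambda>st i. div_step v b p i st) (real k, \<lambda>_. 0) \<pi>) j)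
      \<le> indiv_potential v b p S \<pi> (real k, \<lambda>_. 0, \<lambda>_. 0)"
    using div_total_le_min_demand[OF assms(3,4), of "real k" "\<lambda>_. 0" v b p] assms(5)
    by (simp add: indiv_potential_def)
  also have "\<dots> \<le> measure_pmf.expectation
                (foldl (\<lambda>M i. M \<bind> indiv_step v b p i) (return_pmf (real k, \<lambda>_. 0, \<lambda>_. 0)) \<pi>)
                (\<lambda>st. \<Sum>j\<in>S. snd (snd st) j)"
    using indiv_potential_le_expected_charge[OF assms(1-4), of "return_pmf (real k, \<lambda>_. 0, \<lambda>_. 0)" v]
      assms(5) by (simp add: indiv_invariant_def)
  finally show ?thesis .
qed

theorem lemma1:
  fixes v b :: "'a \<Rightarrow> real" and S :: "'a set" and p :: real and k :: nat
  assumes "finite S"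
    and "\<forall>i\<in>S. v i \<ge> 0" and "\<forall>i\<in>S. b i \<ge> 0"
    and "p > 0" and "k > 0"
  shows "measure_pmf.expectation (Indiv_Alloc v b S p k) (\<lambda>(x, xt). \<Sum>i\<in>S. xt i)
           \<ge> 1 / 2 * measure_pmf.expectation (Div_Alloc v b S p k) (\<lambda>x'. \<Sum>i\<in>S. x' i)"
proof -
  let ?P = "pmf_of_set (permutations_of_set S)"
  let ?charge = "\<lambda>st. \<Sum>j\<in>S. snd (snd st) j"
  define F where "F \<pi> = foldl (\<lambda>M i. M \<bind> indiv_step v b p i) (return_pmf (real k, \<lambda>_. 0, \<lambda>_. 0)) \<pi>"
    for \<pi>
  define G where "G \<pi> = snd (foldl (\<lambda>st i. div_step v b p i st) (real k, \<lambda>_. 0) \<pi>)" for \<pi>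
  have P: "set_pmf ?P = permutations_of_set S" "finite (set_pmf ?P)"
    using assms(1) by auto
  have "measure_pmf.expectation ?P (\<lambda>\<pi>. 1/2 * (\<Sum>j\<in>S. G \<pi> j))
      \<le> measure_pmf.expectation ?P (\<lambda>\<pi>. measure_pmf.expectation (F \<pi>) ?charge)"
    using P half_div_total_le_expected_charge[OF assms(4,3,1)]
    by (intro expectation_mono_finite) (auto simp: F_def G_def permutations_of_set_def)
  moreover have "measure_pmf.expectation ?P (\<lambda>\<pi>. measure_pmf.expectation (F \<pi>) ?charge)
      = measure_pmf.expectation (Indiv_Alloc v b S p k) (\<lambda>(x, xt). \<Sum>i\<in>S. xt i)"
    unfolding Indiv_Alloc_def F_def[symmetric] using P
    by (subst expectation_bind_finite)
       (auto simp: F_def finite_set_pmf_foldl_indiv_step case_prod_beta)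
  ultimately show ?thesis
    by (simp add: Div_Alloc_def G_def)
qed

end
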